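(* Let $(G,\rho)$ have vertices $v,w$ and edges $a_1,\dots,a_5$, each joining $v$ and $w$, with $\rho_v=(a_1,a_2,a_3,a_4,a_5)$ and $\rho_w=(a_1,a_3,a_2,a_5,a_4)$. Let $(G',\rho')$ have the same vertices $v,w$ and edges $b_1,\dots,b_5$, each joining $v$ and $w$, with $\rho'_v=(b_1,b_4,b_2,b_5,b_3)$ and $\rho'_w=(b_1,b_5,b_3,b_4,b_2)$. Let $\varphi:\mathcal T(G)\to\mathcal T(G')$ send the tree $\{a_i\}$ to $\{b_i\}$, and let $\gamma:\operatorname{Pic}^0(G)\to\operatorname{Pic}^0(G')$ send the class of $n v-n w$ to the class of $2nv-2nw$ (an isomorphism since both groups are $\mathbb Z/5\mathbb Z$). Then for every vertex $u\in\{v,w\}$ and for $\alpha$ either the rotor routing process or the Bernardi process, $\varphi(\alpha_u^{G}(S,T))=\alpha_u^{G'}(\gamma(S),\varphi(T))$ for all $S\in\operatorname{Pic}^0(G)$, $T\in\mathcal T(G)$. However, the genus of $(G,\rho)$ is $1$ while the genus of $(G',\rho')$ is $2$.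
   Context: A ribbon graph $(G,\rho)$ is a finite connected loopless multigraph with, for each vertex $u$, a cyclic order $\rho_u$ on the edges at $u$. $\mathcal T(G)$ is the set of spanning trees (here each single edge). $\operatorname{Pic}^0(G)$ is the group of degree-zero integer chip configurations modulo firings (firing $u$ sends one chip from $u$ along each incident edge); $\operatorname{Pic}^k$ likewise for degree $k$. Rotor routing torsor $r_u$: for $S\in\operatorname{Pic}^0$, $T\in\mathcal T$, take a representative of $S$ nonnegative away from $u$; orient $T$ towards $u$, giving each other vertex an outgoing edge (rotor); while some vertex $x\ne u$ has positive chips, advance its rotor to the next edge in $\rho_x$ and send a chip along it; when all vertices other than $u$ have zero chips, the rotors form $r_u(S,T)$. Bernardi torsor $\beta_u$: with half-edges $(e,x)$, for $T$ start at $(e_0,u)$ for a fixed edge $e_0$ at $u$; at $(e',x')$: if $e'\in T$ with other endpoint $y$, move to $(e'',y)$ with $e''$ following $e'$ in $\rho_y$; if $e'\notin T$, move to $(\tilde e,x')$ with $\tilde e$ following $e'$ in $\rho_{x'}$ and place a chip on $x'$ if the other half-edge of $e'$ has not yet been visited. Stop on returning to $(e_0,u)$. The divisors $D_T$ (degree $|E|-|V|+1$) give a bijection of $\mathcal T$ with $\operatorname{Pic}^{|E|-|V|+1}$, and $\beta_u(S,T)$ is the unique $T'$ with $[D_{T'}]=[D_T]+S$. Genus: a cycle is a closed walk which, entering a vertex $x$ along $e$, leaves along the edge following $e$ in $\rho_x$; the genus $g$ satisfies $2g=2-|V|+|E|-\operatorname{cyc}(G,\rho)$, where $\operatorname{cyc}$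 is the number of cycles. *)

theory Defs
  imports Main
begin

text \<open>A ribbon graph: vertex set, edge set, endpoints of each edge (a two-element
set, the graph being loopless), and for each vertex the cyclic order of the
edges at it, given as a list read cyclically.\<close>

record ('v, 'e) ribbon =
  verts :: "'v set"
  edges :: "'e set"
  ends  :: "'e \<Rightarrow> 'v set"
  rho   :: "'v \<Rightarrow> 'e list"

definition nxt :: "('v, 'e) ribbon \<Rightarrow> 'v \<Rightarrow> 'e \<Rightarrow> 'e" where
  "nxt G x e = (let l = rho G x; i = (LEAST i. i < length l \<and> l ! i = e)
                in l ! (Suc i mod length l))"

definition other :: "('v, 'e) ribbon \<Rightarrow> 'v \<Rightarrow> 'e \<Rightarrow> 'v" where
  "other G x e = (THE y. ends G e = {x, y})"

definition spanning_trees :: "('v, 'e) ribbon \<Rightarrow> 'e set set" where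
  "spanning_trees G = {T. T \<subseteq> edges G \<and> card T + 1 = card (verts G) \<and>
      (\<forall>x\<in>verts G. \<forall>y\<in>verts G.
          (x, y) \<in> {(a, b). \<exists>e\<in>T. ends G e = {a, b}}\<^sup>*)}"

text \<open>Chip configurations are functions 'v => int (only values on the vertex set
matter). Linear equivalence: differing by a sequence of firings, i.e. by an
integer combination f of firing vectors.\<close>
definition lin_equiv :: "('v, 'e) ribbon \<Rightarrow> ('v \<Rightarrow> int) \<Rightarrow> ('v \<Rightarrow> int) \<Rightarrow> bool" where
  "lin_equiv G D D' \<longleftrightarrow> (\<exists>f :: 'v \<Rightarrow> int. \<forall>y\<in>verts G.
      D' y = D y + (\<Sum>e\<in>{e\<in>edges G. y \<in> ends G e}. f (other G y e) - f y))"

text \<open>r is the orientation of tree T towards u: every vertex x other than u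
gets an outgoing tree edge r x, and following these edges leads to u.\<close>
definition tree_rotors :: "('v, 'e) ribbon \<Rightarrow> 'v \<Rightarrow> 'e set \<Rightarrow> ('v \<Rightarrow> 'e) \<Rightarrow> bool" where
  "tree_rotors G u T r \<longleftrightarrow>
     (\<forall>x\<in>verts G - {u}. r x \<in> T \<and> x \<in> ends G (r x) \<and>
        (\<exists>k. ((\<lambda>z. other G z (r z)) ^^ k) x = u))"

definition rr_step :: "('v, 'e) ribbon \<Rightarrow> 'v \<Rightarrow> ('v \<Rightarrow> int) \<times> ('v \<Rightarrow> 'e)
                        \<Rightarrow> ('v \<Rightarrow> int) \<times> ('v \<Rightarrow> 'e) \<Rightarrow> bool" where
  "rr_step G u s s' \<longleftrightarrow> (\<exists>x\<in>verts G - {u}. fst s x > 0 \<and>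
      snd s' = (snd s)(x := nxt G x (snd s x)) \<and>
      fst s' = (\<lambda>z. fst s z - (if z = x then 1 else 0)
                     + (if z = other G x (snd s' x) then 1 else 0)))"

text \<open>The rotor routing torsor r_u(S,T), S given by any representative D.\<close>
definition rotor_route :: "('v, 'e) ribbon \<Rightarrow> 'v \<Rightarrow> ('v \<Rightarrow> int) \<Rightarrow> 'e set \<Rightarrow> 'e set" where
  "rotor_route G u D T = (THE T'. \<exists>D' r D'' r'.
      lin_equiv G D D' \<and> (\<forall>x\<in>verts G - {u}. D' x \<ge> 0) \<and>
      tree_rotors G u T r \<and>
      (rr_step G u)\<^sup>*\<^sup>* (D', r) (D'', r') \<and>
      (\<forall>x\<in>verts G - {u}. D'' x = 0) \<and>
      T' = r' ` (verts G - {u}))"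

definition bern_step :: "('v, 'e) ribbon \<Rightarrow> 'e set \<Rightarrow> 'e \<times> 'v \<Rightarrow> 'e \<times> 'v" where
  "bern_step G T h = (let e = fst h; x = snd h in
      if e \<in> T then (let y = other G x e in (nxt G y e, y)) else (nxt G x e, x))"

definition bern_tour :: "('v, 'e) ribbon \<Rightarrow> 'v \<Rightarrow> 'e \<Rightarrow> 'e set \<Rightarrow> nat \<Rightarrow> 'e \<times> 'v" where
  "bern_tour G u e0 T k = (bern_step G T ^^ k) (e0, u)"

definition bern_len :: "('v, 'e) ribbon \<Rightarrow> 'v \<Rightarrow> 'e \<Rightarrow> 'e set \<Rightarrow> nat" where
  "bern_len G u e0 T = (LEAST n. 0 < n \<and> bern_tour G u e0 T n = (e0, u))"

definition bern_div :: "('v, 'e) ribbon \<Rightarrow> 'v \<Rightarrow> 'e \<Rightarrow> 'e set \<Rightarrow> 'v \<Rightarrow> int" where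
  "bern_div G u e0 T x = int (card {k. k < bern_len G u e0 T \<and>
      snd (bern_tour G u e0 T k) = x \<and> fst (bern_tour G u e0 T k) \<notin> T \<and>
      (fst (bern_tour G u e0 T k), other G x (fst (bern_tour G u e0 T k)))
         \<notin> bern_tour G u e0 T ` {..<k}})"

text \<open>The Bernardi torsor beta_u(S,T) (with base edge e0 at u), S given by a representative D.\<close>
definition bernardi :: "('v, 'e) ribbon \<Rightarrow> 'v \<Rightarrow> 'e \<Rightarrow> ('v \<Rightarrow> int) \<Rightarrow> 'e set \<Rightarrow> 'e set" where
  "bernardi G u e0 D T = (THE T'. T' \<in> spanning_trees G \<and>
      lin_equiv G (bern_div G u e0 T') (\<lambda>z. bern_div G u e0 T z + D z))"

definition half_edges :: "('v, 'e) ribbon \<Rightarrow> ('e \<times> 'v) set" where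
  "half_edges G = {(e, x). e \<in> edges G \<and> x \<in> ends G e}"

text \<open>Half-edge (e,x): leaving x along e; arriving at y, leave along the next edge at y.\<close>
definition face_step :: "('v, 'e) ribbon \<Rightarrow> 'e \<times> 'v \<Rightarrow> 'e \<times> 'v" where
  "face_step G h = (let y = other G (snd h) (fst h) in (nxt G y (fst h), y))"

definition cyc :: "('v, 'e) ribbon \<Rightarrow> nat" where
  "cyc G = card ((\<lambda>h. range (\<lambda>k. (face_step G ^^ k) h)) ` half_edges G)"

definition genus :: "('v, 'e) ribbon \<Rightarrow> int" where
  "genus G = (2 - int (card (verts G)) + int (card (edges G)) - int (cyc G)) div 2"

datatype vtx = Vv | Vw
datatype aedge = A nat
datatype bedge = B nat

definition G0 :: "(vtx, aedge) ribbon" where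
  "G0 = \<lparr> verts = {Vv, Vw}, edges = A ` {1..5}, ends = (\<lambda>_. {Vv, Vw}),
          rho = (\<lambda>x. if x = Vv then [A 1, A 2, A 3, A 4, A 5]
                               else [A 1, A 3, A 2, A 5, A 4]) \<rparr>"

definition G1 :: "(vtx, bedge) ribbon" where
  "G1 = \<lparr> verts = {Vv, Vw}, edges = B ` {1..5}, ends = (\<lambda>_. {Vv, Vw}),
          rho = (\<lambda>x. if x = Vv then [B 1, B 4, B 2, B 5, B 3]
                               else [B 1, B 5, B 3, B 4, B 2]) \<rparr>"

definition phi :: "aedge set \<Rightarrow> bedge set" where
  "phi T = (\<lambda>e. case e of A i \<Rightarrow> B i) ` T"

definition dvw :: "int \<Rightarrow> vtx \<Rightarrow> int" where
  "dvw n = (\<lambda>z. if z = Vv then n else -n)"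

end

theory Submission
  imports Defs
begin

text \<open>Both ribbon graphs are dipoles: two vertices joined by five parallel edges. So the spanning
  trees are the single edges, and two divisors of the same degree are linearly equivalent iff they
  agree mod 5 at one (either) vertex. On a dipole both torsors rotate the tree edge along a cyclic
  order: rotor routing at u moves it D(x) steps along the order at the other vertex x, and the
  Bernardi process moves it D(u) steps along the order at u, because the Bernardi divisor of the
  tree e has as many chips on u as edges are passed from e0 to e around u. The cyclic orders of
  G1 list the edges of G0 with step 2 (the k-th edge at x in G0 is the 2k-th one in G1), so a
  rotation by d in G0 becomes a rotation by 2d in G1, which is what gamma does. The genera are
  read off the face cycles: three for G0, one for G1.\<close>

subsection \<open>Cyclic orders\<close>

definition list_index :: "'a list \<Rightarrow> 'a \<Rightarrow> nat" where
  "list_index l e = (LEAST i. i < length l \<and> l ! i = e)"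

lemma list_index_nth:
  assumes "distinct l" "i < length l"
  shows "list_index l (l ! i) = i"
  unfolding list_index_def
  by (rule Least_equality) (use assms nth_eq_iff_index_eq in auto)

lemma list_index_Cons_self [simp]: "list_index (e # l) e = 0"
  unfolding list_index_def by (rule Least_equality) auto

lemma list_index_Cons [simp]:
  assumes "x \<noteq> e" "e \<in> set l"
  shows "list_index (x # l) e = Suc (list_index l e)"
  unfolding list_index_def
proof (rule Least_equality)
  have "\<exists>i. i < length l \<and> l ! i = e" using assms(2) by (auto simp: in_set_conv_nth)
  then show "Suc (LEAST i. i < length l \<and> l ! i = e) < length (x # l) \<and>
      (x # l) ! Suc (LEAST i. i < length l \<and> l ! i = e) = e"
    by (simp add: LeastI_ex[of "\<lambda>i. i < length l \<and> l ! i = e"])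
next
  fix i assume "i < length (x # l) \<and> (x # l) ! i = e"
  with assms(1) obtain j where "i = Suc j" "j < length l" "l ! j = e" by (cases i) auto
  then show "Suc (LEAST i. i < length l \<and> l ! i = e) \<le> i" by (simp add: Least_le)
qed

lemma nxt_eq_list_index:
  "nxt G x e = rho G x ! (Suc (list_index (rho G x) e) mod length (rho G x))"
  by (simp add: nxt_def list_index_def Let_def)

lemma funpow_nxt_nth:
  assumes "distinct (rho G x)" "i < length (rho G x)"
  shows "(nxt G x ^^ j) (rho G x ! i) = rho G x ! ((i + j) mod length (rho G x))"
proof (induction j)
  case (Suc j)
  have "(i + j) mod length (rho G x) < length (rho G x)"
    using assms(2) by (intro mod_less_divisor) linarith
  with Suc show ?case
    using assms(1) by (simp add: nxt_eq_list_index list_index_nth mod_Suc_eq)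
qed (use assms(2) in simp)

subsection \<open>Dipoles\<close>

definition dipole :: "(vtx, 'e) ribbon \<Rightarrow> bool" where
  "dipole G \<longleftrightarrow> verts G = {Vv, Vw} \<and> (\<forall>e. ends G e = {Vv, Vw}) \<and>
     (\<forall>x. distinct (rho G x) \<and> set (rho G x) = edges G)"

fun opposite :: "vtx \<Rightarrow> vtx" where
  "opposite Vv = Vw"
| "opposite Vw = Vv"

lemma opposite_neq [simp]: "opposite x \<noteq> x"
  by (cases x) simp_all

lemma verts_minus_dipole: "dipole G \<Longrightarrow> verts G - {u} = {opposite u}"
  by (cases u) (auto simp: dipole_def)

lemma other_dipole [simp]: "dipole G \<Longrightarrow> other G x e = opposite x"
  unfolding other_def dipole_def
  by (rule the_equality) (cases x; auto simp: doubleton_eq_iff)+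

lemma length_rho_dipole: "dipole G \<Longrightarrow> length (rho G x) = card (edges G)"
  unfolding dipole_def by (metis distinct_card)

lemma edge_dipole_nth:
  assumes "dipole G" "e \<in> edges G"
  obtains k where "k < card (edges G)" "e = rho G x ! k"
  using assms by (metis dipole_def in_set_conv_nth length_rho_dipole)

lemma spanning_trees_dipole:
  assumes "dipole G"
  shows "spanning_trees G = (\<lambda>e. {e}) ` edges G"
proof
  show "spanning_trees G \<subseteq> (\<lambda>e. {e}) ` edges G"
  proof
    fix T assume "T \<in> spanning_trees G"
    then have "T \<subseteq> edges G" "card T = 1"
      using assms by (auto simp: spanning_trees_def dipole_def)
    then show "T \<in> (\<lambda>e. {e}) ` edges G" by (metis card_1_singletonE image_eqI insert_subset)
  qed
next
  show "(\<lambda>e. {e}) ` edges G \<subseteq> spanning_trees G"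
  proof clarify
    fix e assume e: "e \<in> edges G"
    let ?R = "{(a, b). \<exists>e'\<in>{e}. ends G e' = {a, b}}"
    have "(x, y) \<in> ?R\<^sup>*" if "x \<in> {Vv, Vw}" "y \<in> {Vv, Vw}" for x y
    proof (cases "x = y")
      case False
      then have "(x, y) \<in> ?R" using that assms by (auto simp: dipole_def)
      then show ?thesis by blast
    qed simp
    then show "{e} \<in> spanning_trees G"
      using assms e by (auto simp: spanning_trees_def dipole_def)
  qed
qed

lemma lin_equiv_dipole:
  assumes "dipole G"
  shows "lin_equiv G D D' \<longleftrightarrow>
    D' Vv + D' Vw = D Vv + D Vw \<and> D' x mod int (card (edges G)) = D x mod int (card (edges G))"
proof -
  let ?m = "int (card (edges G))"
  have firing: "(\<Sum>e\<in>{e\<in>edges G. y \<in> ends G e}. f (other G y e) - f y) = ?m * (f (opposite y) - f y)"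
    for y and f :: "vtx \<Rightarrow> int"
  proof -
    have "{e\<in>edges G. y \<in> ends G e} = edges G" using assms by (cases y) (auto simp: dipole_def)
    then show ?thesis using assms by simp
  qed
  have firings: "lin_equiv G D D' \<longleftrightarrow> (\<exists>k. D' Vv = D Vv + ?m * k \<and> D' Vw = D Vw - ?m * k)"
  proof
    assume "lin_equiv G D D'"
    then obtain f :: "vtx \<Rightarrow> int" where "\<forall>y\<in>verts G.
        D' y = D y + (\<Sum>e\<in>{e\<in>edges G. y \<in> ends G e}. f (other G y e) - f y)"
      unfolding lin_equiv_def by blast
    then show "\<exists>k. D' Vv = D Vv + ?m * k \<and> D' Vw = D Vw - ?m * k"
      using assms by (intro exI[of _ "f Vw - f Vv"]) (auto simp: firing dipole_def algebra_simps)
  next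
    assume "\<exists>k. D' Vv = D Vv + ?m * k \<and> D' Vw = D Vw - ?m * k"
    then obtain k where "D' Vv = D Vv + ?m * k" "D' Vw = D Vw - ?m * k" by blast
    then show "lin_equiv G D D'"
      unfolding lin_equiv_def using assms
      by (intro exI[of _ "\<lambda>z. if z = Vw then k else 0"]) (auto simp: firing dipole_def)
  qed
  moreover have "(\<exists>k. D' Vv = D Vv + ?m * k \<and> D' Vw = D Vw - ?m * k) \<longleftrightarrow>
      D' Vv + D' Vw = D Vv + D Vw \<and> ?m dvd D' Vv - D Vv"
    by (auto elim!: dvdE simp: algebra_simps)
  moreover have "?m dvd D' Vv - D Vv \<longleftrightarrow> ?m dvd D' x - D x" if "D' Vv + D' Vw = D Vv + D Vw"
  proof (cases x)
    case Vw
    then have "D' x - D x = - (D' Vv - D Vv)" using that by simp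
    then show ?thesis by (simp only: dvd_minus_iff)
  qed simp
  ultimately show ?thesis by (auto simp: mod_eq_dvd_iff)
qed

subsection \<open>Rotor routing on a dipole\<close>

lemma tree_rotors_dipole:
  assumes "dipole G"
  shows "tree_rotors G u {e} r \<longleftrightarrow> r (opposite u) = e"
  using assms unfolding tree_rotors_def verts_minus_dipole[OF assms]
  by (cases u) (auto simp: dipole_def intro: exI[of _ 1])

lemma rr_steps_dipole:
  assumes "dipole G" "D (opposite u) = int j"
  shows "(rr_step G u)\<^sup>*\<^sup>* (D, r)
     (D(opposite u := 0, u := D u + int j), r(opposite u := (nxt G (opposite u) ^^ j) (r (opposite u))))"
  using assms(2)
proof (induction j arbitrary: D r)
  case 0
  then show ?case by (simp add: fun_upd_idem)
next
  case (Suc j)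
  let ?x = "opposite u"
  define D1 where "D1 = D(?x := D ?x - 1, u := D u + 1)"
  define r1 where "r1 = r(?x := nxt G ?x (r ?x))"
  have "rr_step G u (D, r) (D1, r1)"
    unfolding rr_step_def verts_minus_dipole[OF assms(1)]
    using Suc.prems assms(1) by (cases u) (auto simp: D1_def r1_def)
  moreover have "(rr_step G u)\<^sup>*\<^sup>* (D1, r1)
     (D1(?x := 0, u := D1 u + int j), r1(?x := (nxt G ?x ^^ j) (r1 ?x)))"
    by (rule Suc.IH) (use Suc.prems in \<open>simp add: D1_def\<close>)
  moreover have "D1(?x := 0, u := D1 u + int j) = D(?x := 0, u := D u + int (Suc j))"
    by (simp add: D1_def add.assoc)
  moreover have "r1(?x := (nxt G ?x ^^ j) (r1 ?x)) = r(?x := (nxt G ?x ^^ Suc j) (r ?x))"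
    by (simp add: r1_def funpow_swap1)
  ultimately show ?case by (metis converse_rtranclp_into_rtranclp)
qed

lemma rr_steps_dipoleD:
  assumes "dipole G" "(rr_step G u)\<^sup>*\<^sup>* s0 s"
  shows "\<exists>j. fst s (opposite u) = fst s0 (opposite u) - int j \<and>
             snd s (opposite u) = (nxt G (opposite u) ^^ j) (snd s0 (opposite u))"
  using assms(2)
proof (induction rule: rtranclp_induct)
  case base
  show ?case by (intro exI[of _ 0]) simp
next
  case (step s s')
  then obtain j where "fst s (opposite u) = fst s0 (opposite u) - int j"
      "snd s (opposite u) = (nxt G (opposite u) ^^ j) (snd s0 (opposite u))"
    by blast
  moreover from step(2) have "fst s' (opposite u) = fst s (opposite u) - 1"
      "snd s' (opposite u) = nxt G (opposite u) (snd s (opposite u))"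
    unfolding rr_step_def verts_minus_dipole[OF assms(1)] using assms(1) by (cases u; auto)+
  ultimately show ?case by (intro exI[of _ "Suc j"]) auto
qed

lemma mod_add_int_eq_nat:
  assumes "int j mod int m = a mod int m"
  shows "(k + j) mod m = nat ((int k + a) mod int m)"
proof -
  have "int ((k + j) mod m) = (int k + int j) mod int m" by (simp add: of_nat_mod)
  also have "\<dots> = (int k + a) mod int m" using assms by (rule mod_add_cong[OF refl])
  finally show ?thesis by simp
qed

lemma rotor_route_dipole:
  assumes G: "dipole G" and k: "k < card (edges G)"
  shows "rotor_route G u D {rho G (opposite u) ! k} =
    {rho G (opposite u) ! nat ((int k + D (opposite u)) mod int (card (edges G)))}"
proof -
  let ?x = "opposite u" and ?m = "card (edges G)"
  let ?l = "rho G ?x"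
  let ?e = "?l ! k" and ?t = "?l ! nat ((int k + D ?x) mod int ?m)"
  have l: "distinct ?l" "length ?l = ?m" using G by (auto simp: dipole_def length_rho_dipole)
  have turn: "(nxt G ?x ^^ j) ?e = ?t" if "int j mod int ?m = D ?x mod int ?m" for j
    using funpow_nxt_nth[OF l(1)] k l(2) mod_add_int_eq_nat[OF that] by simp
  let ?P = "\<lambda>T'. \<exists>D' r D'' r'.
      lin_equiv G D D' \<and> (\<forall>x\<in>verts G - {u}. D' x \<ge> 0) \<and>
      tree_rotors G u {?e} r \<and>
      (rr_step G u)\<^sup>*\<^sup>* (D', r) (D'', r') \<and>
      (\<forall>x\<in>verts G - {u}. D'' x = 0) \<and>
      T' = r' ` (verts G - {u})"
  have "?P {?t}"
  proof -
    define j where "j = nat (D ?x mod int ?m)"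
    have j: "int j = D ?x mod int ?m" using k by (simp add: j_def)
    define D' where "D' = D(?x := int j, u := D u + (D ?x - int j))"
    have "D' Vv + D' Vw = D Vv + D Vw" by (cases u) (simp_all add: D'_def)
    moreover have "D' ?x mod int ?m = D ?x mod int ?m" by (simp add: D'_def j)
    ultimately have equiv: "lin_equiv G D D'" using lin_equiv_dipole[OF G] by blast
    have run: "(rr_step G u)\<^sup>*\<^sup>* (D', \<lambda>_. ?e) (D'(?x := 0, u := D' u + int j), (\<lambda>_. ?e)(?x := ?t))"
      using rr_steps_dipole[OF G, of D' u j "\<lambda>_. ?e"] turn[of j] j by (simp add: D'_def)
    show ?thesis
      unfolding verts_minus_dipole[OF G]
      by (rule exI[of _ D'], rule exI[of _ "\<lambda>_. ?e"],
          rule exI[of _ "D'(?x := 0, u := D' u + int j)"], rule exI[of _ "(\<lambda>_. ?e)(?x := ?t)"])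
        (use equiv run tree_rotors_dipole[OF G] in \<open>simp add: D'_def\<close>)
  qed
  moreover have "T' = {?t}" if "?P T'" for T'
  proof -
    obtain D' r D'' r' where h: "lin_equiv G D D'" "tree_rotors G u {?e} r"
      "(rr_step G u)\<^sup>*\<^sup>* (D', r) (D'', r')" "D'' ?x = 0" "T' = {r' ?x}"
      using \<open>?P T'\<close> unfolding verts_minus_dipole[OF G] by auto
    obtain j where j: "D'' ?x = D' ?x - int j" "r' ?x = (nxt G ?x ^^ j) (r ?x)"
      using rr_steps_dipoleD[OF G h(3)] by auto
    have "int j mod int ?m = D ?x mod int ?m"
      using j(1) h(4) lin_equiv_dipole[OF G, of D D' ?x] h(1) by simp
    then show ?thesis using h(5) j(2) tree_rotors_dipole[OF G] h(2) turn by simp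
  qed
  ultimately show ?thesis unfolding rotor_route_def by (rule the_equality)
qed

subsection \<open>Bernardi process on a dipole\<close>

lemma mod_shift_iff:
  fixes j k k0 m :: nat and a :: int
  assumes "j < m" "k0 < m"
  shows "(int ((k + m - k0) mod m) + a) mod int m = int ((j + m - k0) mod m) mod int m \<longleftrightarrow>
    j = nat ((int k + a) mod int m)"
proof -
  have dist: "int ((i + m - k0) mod m) = (int i - int k0) mod int m" for i
  proof -
    have "int ((i + m - k0) mod m) = (int i - int k0 + int m) mod int m"
      using assms(2) by (simp add: of_nat_mod of_nat_diff algebra_simps)
    then show ?thesis by (simp only: mod_add_self2)
  qed
  have "(int ((k + m - k0) mod m) + a) mod int m = int ((j + m - k0) mod m) mod int m \<longleftrightarrow>
      (int k - int k0 + a) mod int m = (int j - int k0) mod int m"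
    unfolding dist by (simp add: mod_add_left_eq)
  also have "\<dots> \<longleftrightarrow> int m dvd (int k - int k0 + a) - (int j - int k0)"
    by (rule mod_eq_dvd_iff)
  also have "(int k - int k0 + a) - (int j - int k0) = (int k + a) - int j"
    by simp
  also have "int m dvd (int k + a) - int j \<longleftrightarrow> (int k + a) mod int m = int j mod int m"
    by (rule mod_eq_dvd_iff [symmetric])
  also have "\<dots> \<longleftrightarrow> (int k + a) mod int m = int j"
    using assms(1) by simp
  also have "\<dots> \<longleftrightarrow> j = nat ((int k + a) mod int m)"
    using assms(1) by (auto simp: nat_eq_iff)
  finally show ?thesis .
qed

text \<open>The hypotheses hold for every dipole (the tour circles u from e0 until it meets the tree
  edge, leaving a chip on u for each edge passed, and D_T has degree |E| - |V| + 1); here they are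
  verified by computation only for G0 and G1.\<close>

lemma bernardi_dipole:
  assumes G: "dipole G" and k0: "k0 < card (edges G)" and k: "k < card (edges G)"
    and div_root: "\<And>j. j < card (edges G) \<Longrightarrow> bern_div G u (rho G u ! k0) {rho G u ! j} u =
        int ((j + card (edges G) - k0) mod card (edges G))"
    and div_deg: "\<And>j. j < card (edges G) \<Longrightarrow>
        bern_div G u (rho G u ! k0) {rho G u ! j} Vv + bern_div G u (rho G u ! k0) {rho G u ! j} Vw =
        int (card (edges G)) - 1"
    and D: "D Vv + D Vw = 0"
  shows "bernardi G u (rho G u ! k0) D {rho G u ! k} =
    {rho G u ! nat ((int k + D u) mod int (card (edges G)))}"
proof -
  let ?m = "card (edges G)" and ?l = "rho G u"
  let ?k' = "nat ((int k + D u) mod int ?m)"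
  let ?div = "\<lambda>j. bern_div G u (?l ! k0) {?l ! j}"
  have l: "distinct ?l" "length ?l = ?m" "set ?l = edges G"
    using G by (auto simp: dipole_def length_rho_dipole)
  have "edges G = {?l ! j | j. j < ?m}" by (metis l(2,3) set_conv_nth)
  then have trees: "spanning_trees G = {{?l ! j} | j. j < ?m}"
    by (auto simp: spanning_trees_dipole[OF G])
  have equiv_iff: "lin_equiv G (?div j) (\<lambda>z. ?div k z + D z) \<longleftrightarrow> j = ?k'" if j: "j < ?m" for j
  proof -
    have "lin_equiv G (?div j) (\<lambda>z. ?div k z + D z) \<longleftrightarrow> (?div k u + D u) mod int ?m = ?div j u mod int ?m"
    proof -
      have "(?div k Vv + D Vv) + (?div k Vw + D Vw) = ?div j Vv + ?div j Vw"
        using div_deg[OF j] div_deg[OF k] D by simp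
      then show ?thesis using lin_equiv_dipole[OF G, of "?div j" "\<lambda>z. ?div k z + D z" u] by simp
    qed
    also have "\<dots> \<longleftrightarrow> j = ?k'"
      unfolding div_root[OF j] div_root[OF k] by (rule mod_shift_iff[OF j k0])
    finally show ?thesis .
  qed
  have "?k' < ?m" using k by (simp add: nat_less_iff)
  show ?thesis
    unfolding bernardi_def
  proof (rule the_equality)
    show "{?l ! ?k'} \<in> spanning_trees G \<and> lin_equiv G (bern_div G u (?l ! k0) {?l ! ?k'})
        (\<lambda>z. bern_div G u (?l ! k0) {?l ! k} z + D z)"
      using trees equiv_iff \<open>?k' < ?m\<close> by auto
  next
    fix T' assume T': "T' \<in> spanning_trees G \<and>
        lin_equiv G (bern_div G u (?l ! k0) T') (\<lambda>z. bern_div G u (?l ! k0) {?l ! k} z + D z)"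
    then obtain j where j: "j < ?m" "T' = {?l ! j}" using trees by blast
    then have "j = ?k'" using T' equiv_iff by simp
    then show "T' = {?l ! ?k'}" using j by simp
  qed
qed

subsection \<open>Computing tours and face cycles\<close>

fun iterates :: "('a \<Rightarrow> 'a) \<Rightarrow> 'a \<Rightarrow> nat \<Rightarrow> 'a list" where
  "iterates f h 0 = []"
| "iterates f h (Suc n) = h # iterates f (f h) n"

lemma iterates_numeral [simp]: "iterates f h (numeral n) = h # iterates f (f h) (pred_numeral n)"
  by (simp add: numeral_eq_Suc)

lemma funpow_numeral_apply: "(f ^^ numeral n) x = (f ^^ pred_numeral n) (f x)"
  by (simp add: numeral_eq_Suc funpow_swap1)

lemma iterates_eq_map: "iterates f h n = map (\<lambda>k. (f ^^ k) h) [0..<n]"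
proof (induction n arbitrary: h)
  case (Suc n)
  then show ?case by (simp add: map_upt_Suc funpow_swap1 del: upt_Suc)
qed simp

lemma bern_step_apply [simp]:
  "bern_step G T (e, x) =
    (if e \<in> T then (nxt G (other G x e) e, other G x e) else (nxt G x e, x))"
  by (simp add: bern_step_def Let_def)

lemma bern_len_eqI:
  assumes "(bern_step G T ^^ n) (e0, u) = (e0, u)" "0 < n"
    "(e0, u) \<notin> set (tl (iterates (bern_step G T) (e0, u) n))"
  shows "bern_len G u e0 T = n"
  unfolding bern_len_def
proof (rule Least_equality)
  show "0 < n \<and> bern_tour G u e0 T n = (e0, u)"
    using assms(1,2) by (simp add: bern_tour_def)
next
  fix m assume m: "0 < m \<and> bern_tour G u e0 T m = (e0, u)"
  show "n \<le> m"
  proof (rule ccontr)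
    assume "\<not> n \<le> m"
    with m have "m \<in> {Suc 0..<n}" by simp
    moreover have "set (tl (iterates (bern_step G T) (e0, u) n)) = bern_tour G u e0 T ` {Suc 0..<n}"
      by (simp add: iterates_eq_map bern_tour_def map_tl[symmetric] tl_upt)
    ultimately show False using m assms(3) by (metis imageI)
  qed
qed

lemma bern_div_eq_iterates:
  assumes "(bern_step G T ^^ n) (e0, u) = (e0, u)" "0 < n"
    "(e0, u) \<notin> set (tl (iterates (bern_step G T) (e0, u) n))"
  shows "bern_div G u e0 T x = int (length (filter (\<lambda>k.
     snd (iterates (bern_step G T) (e0, u) n ! k) = x \<and>
     fst (iterates (bern_step G T) (e0, u) n ! k) \<notin> T \<and>
     (fst (iterates (bern_step G T) (e0, u) n ! k), other G x (fst (iterates (bern_step G T) (e0, u) n ! k)))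
       \<notin> set (take k (iterates (bern_step G T) (e0, u) n))) [0..<n]))"
proof -
  let ?L = "iterates (bern_step G T) (e0, u) n"
  let ?P = "\<lambda>k. snd (bern_tour G u e0 T k) = x \<and> fst (bern_tour G u e0 T k) \<notin> T \<and>
      (fst (bern_tour G u e0 T k), other G x (fst (bern_tour G u e0 T k))) \<notin> bern_tour G u e0 T ` {..<k}"
  have "?L ! k = bern_tour G u e0 T k" "set (take k ?L) = bern_tour G u e0 T ` {..<k}" if "k < n" for k
    using that by (auto simp: iterates_eq_map bern_tour_def take_map min_def atLeast0LessThan)
  then have "filter (\<lambda>k. snd (?L ! k) = x \<and> fst (?L ! k) \<notin> T \<and>
      (fst (?L ! k), other G x (fst (?L ! k))) \<notin> set (take k ?L)) [0..<n] = filter ?P [0..<n]"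
    by (intro filter_cong) auto
  moreover have "length (filter ?P [0..<n]) = card {k. k < n \<and> ?P k}"
    unfolding length_filter_conv_card by (rule arg_cong[where f = card]) auto
  ultimately show ?thesis
    unfolding bern_div_def bern_len_eqI[OF assms] by simp
qed

lemma range_funpow_eq_iterates:
  assumes "(f ^^ p) h = h" "0 < p"
  shows "range (\<lambda>k. (f ^^ k) h) = set (iterates f h p)"
proof
  show "range (\<lambda>k. (f ^^ k) h) \<subseteq> set (iterates f h p)"
  proof clarify
    fix k
    have "(f ^^ k) h = (f ^^ (k mod p)) h" using funpow_mod_eq[OF assms(1)] by simp
    then show "(f ^^ k) h \<in> set (iterates f h p)"
      using assms(2) by (auto simp: iterates_eq_map)
  qed
qed (auto simp: iterates_eq_map)

lemma range_funpow_cong: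
  assumes "(f ^^ p) h = h" "0 < p" "h' \<in> range (\<lambda>k. (f ^^ k) h)"
  shows "range (\<lambda>k. (f ^^ k) h') = range (\<lambda>k. (f ^^ k) h)"
proof -
  obtain i where "h' = (f ^^ i) h" using assms(3) by blast
  then have i: "h' = (f ^^ (i mod p)) h" "i mod p < p"
    using funpow_mod_eq[OF assms(1)] assms(2) by simp_all
  show ?thesis
  proof
    show "range (\<lambda>k. (f ^^ k) h') \<subseteq> range (\<lambda>k. (f ^^ k) h)"
      using i(1) by (auto simp: funpow_add[symmetric, THEN fun_cong, simplified])
  next
    show "range (\<lambda>k. (f ^^ k) h) \<subseteq> range (\<lambda>k. (f ^^ k) h')"
    proof clarify
      fix k
      have "(f ^^ (k + p - i mod p)) h' = (f ^^ (k + p)) h"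
        using i by (simp add: funpow_add[symmetric, THEN fun_cong, simplified])
      also have "\<dots> = (f ^^ k) h" using assms(1) by (simp add: funpow_add)
      finally show "(f ^^ k) h \<in> range (\<lambda>k. (f ^^ k) h')" by (metis rangeI)
    qed
  qed
qed

lemma face_step_apply [simp]: "face_step G (e, x) = (nxt G (other G x e) e, other G x e)"
  by (simp add: face_step_def Let_def)

lemma cyc_eq_card_representatives:
  assumes half: "half_edges G = (\<Union>h\<in>R. range (\<lambda>k. (face_step G ^^ k) h))"
    and periodic: "\<And>h. h \<in> R \<Longrightarrow> \<exists>p>0. (face_step G ^^ p) h = h"
    and separate: "\<And>h h'. h \<in> R \<Longrightarrow> h' \<in> R \<Longrightarrow> h' \<in> range (\<lambda>k. (face_step G ^^ k) h) \<Longrightarrow> h' = h"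
  shows "cyc G = card R"
proof -
  let ?O = "\<lambda>h. range (\<lambda>k. (face_step G ^^ k) h)"
  have self: "h \<in> ?O h" for h by (metis funpow_0 rangeI)
  have orbits: "?O ` half_edges G = ?O ` R"
  proof
    show "?O ` half_edges G \<subseteq> ?O ` R"
    proof clarify
      fix h' assume "h' \<in> half_edges G"
      then obtain h where h: "h \<in> R" "h' \<in> ?O h" unfolding half by (rule UN_E)
      obtain p where "(face_step G ^^ p) h = h" "0 < p" using periodic[OF h(1)] by blast
      then have "?O h' = ?O h" using h(2) by (rule range_funpow_cong)
      then show "?O h' \<in> ?O ` R" using h(1) by (rule image_eqI)
    qed
    show "?O ` R \<subseteq> ?O ` half_edges G"
    proof clarify
      fix h assume "h \<in> R"
      then have "h \<in> half_edges G" unfolding half using self by (rule UN_I)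
      then show "?O h \<in> ?O ` half_edges G" by (rule imageI)
    qed
  qed
  have "inj_on ?O R"
  proof (rule inj_onI)
    fix h h' assume "h \<in> R" "h' \<in> R" and same: "?O h = ?O h'"
    have "h' \<in> ?O h" unfolding same by (rule self)
    with \<open>h \<in> R\<close> \<open>h' \<in> R\<close> show "h = h'" by (metis separate)
  qed
  then have "card (?O ` R) = card R" by (rule card_image)
  then show ?thesis unfolding cyc_def orbits .
qed

subsection \<open>The two examples\<close>

lemma dipole_G0: "dipole G0"
  by (auto simp: dipole_def G0_def)

lemma dipole_G1: "dipole G1"
  by (auto simp: dipole_def G1_def)

lemma card_edges_G0 [simp]: "card (edges G0) = 5"
  using length_rho_dipole[OF dipole_G0, of Vv] by (simp add: G0_def)

lemma card_edges_G1 [simp]: "card (edges G1) = 5"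
  using length_rho_dipole[OF dipole_G1, of Vv] by (simp add: G1_def)

lemma all_less_5: "(\<forall>k::nat < 5. P k) \<longleftrightarrow> P 0 \<and> P 1 \<and> P 2 \<and> P 3 \<and> P 4"
  by (auto simp: less_Suc_eq numeral_eq_Suc)

lemma rho_G0 [simp]:
  "rho G0 Vv = [A 1, A 2, A 3, A 4, A 5]" "rho G0 Vw = [A 1, A 3, A 2, A 5, A 4]"
  by (simp_all add: G0_def)

lemma rho_G1 [simp]:
  "rho G1 Vv = [B 1, B 4, B 2, B 5, B 3]" "rho G1 Vw = [B 1, B 5, B 3, B 4, B 2]"
  by (simp_all add: G1_def)

text \<open>The left-hand sides say A (Suc 0), not A 1: the simplifier rewrites 1 :: nat to Suc 0
  before it tries these rules.\<close>

lemma nxt_G0 [simp]: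
  "nxt G0 Vv (A (Suc 0)) = A 2" "nxt G0 Vv (A 2) = A 3" "nxt G0 Vv (A 3) = A 4"
  "nxt G0 Vv (A 4) = A 5" "nxt G0 Vv (A 5) = A 1"
  "nxt G0 Vw (A (Suc 0)) = A 3" "nxt G0 Vw (A 3) = A 2" "nxt G0 Vw (A 2) = A 5"
  "nxt G0 Vw (A 5) = A 4" "nxt G0 Vw (A 4) = A 1"
  by (simp_all add: nxt_eq_list_index)

lemma nxt_G1 [simp]:
  "nxt G1 Vv (B (Suc 0)) = B 4" "nxt G1 Vv (B 4) = B 2" "nxt G1 Vv (B 2) = B 5"
  "nxt G1 Vv (B 5) = B 3" "nxt G1 Vv (B 3) = B 1"
  "nxt G1 Vw (B (Suc 0)) = B 5" "nxt G1 Vw (B 5) = B 3" "nxt G1 Vw (B 3) = B 4"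
  "nxt G1 Vw (B 4) = B 2" "nxt G1 Vw (B 2) = B 1"
  by (simp_all add: nxt_eq_list_index)

lemmas other_G0 [simp] = other_dipole[OF dipole_G0]
lemmas other_G1 [simp] = other_dipole[OF dipole_G1]

lemma bern_div_G0:
  assumes "k0 < 5" "j < 5"
  shows "bern_div G0 u (rho G0 u ! k0) {rho G0 u ! j} u = int ((j + 5 - k0) mod 5) \<and>
    bern_div G0 u (rho G0 u ! k0) {rho G0 u ! j} Vv + bern_div G0 u (rho G0 u ! k0) {rho G0 u ! j} Vw = 4"
proof -
  have "\<forall>k0<5. \<forall>j<5. bern_div G0 u (rho G0 u ! k0) {rho G0 u ! j} u = int ((j + 5 - k0) mod 5) \<and>
    bern_div G0 u (rho G0 u ! k0) {rho G0 u ! j} Vv + bern_div G0 u (rho G0 u ! k0) {rho G0 u ! j} Vw = 4"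
    unfolding all_less_5
    by (cases u) (simp_all add: bern_div_eq_iterates[where n = 10] funpow_numeral_apply upt_rec)
  with assms show ?thesis by blast
qed

lemma bernardi_G0:
  assumes "k0 < 5" "j < 5" "D Vv + D Vw = 0"
  shows "bernardi G0 u (rho G0 u ! k0) D {rho G0 u ! j} = {rho G0 u ! nat ((int j + D u) mod 5)}"
  using bernardi_dipole[OF dipole_G0, of k0 j u D] bern_div_G0 assms by simp

lemma bern_div_G1:
  assumes "k0 < 5" "j < 5"
  shows "bern_div G1 u (rho G1 u ! k0) {rho G1 u ! j} u = int ((j + 5 - k0) mod 5) \<and>
    bern_div G1 u (rho G1 u ! k0) {rho G1 u ! j} Vv + bern_div G1 u (rho G1 u ! k0) {rho G1 u ! j} Vw = 4"
proof -
  have "\<forall>k0<5. \<forall>j<5. bern_div G1 u (rho G1 u ! k0) {rho G1 u ! j} u = int ((j + 5 - k0) mod 5) \<and>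
    bern_div G1 u (rho G1 u ! k0) {rho G1 u ! j} Vv + bern_div G1 u (rho G1 u ! k0) {rho G1 u ! j} Vw = 4"
    unfolding all_less_5
    by (cases u) (simp_all add: bern_div_eq_iterates[where n = 10] funpow_numeral_apply upt_rec)
  with assms show ?thesis by blast
qed

lemma bernardi_G1:
  assumes "k0 < 5" "j < 5" "D Vv + D Vw = 0"
  shows "bernardi G1 u (rho G1 u ! k0) D {rho G1 u ! j} = {rho G1 u ! nat ((int j + D u) mod 5)}"
  using bernardi_dipole[OF dipole_G1, of k0 j u D] bern_div_G1 assms by simp

lemma half_edges_G0:
  "half_edges G0 = {(A 1, Vv), (A 1, Vw), (A 2, Vv), (A 2, Vw), (A 3, Vv), (A 3, Vw),
     (A 4, Vv), (A 4, Vw), (A 5, Vv), (A 5, Vw)}"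
  by (auto simp: half_edges_def G0_def)

lemma half_edges_G1:
  "half_edges G1 = {(B 1, Vv), (B 1, Vw), (B 2, Vv), (B 2, Vw), (B 3, Vv), (B 3, Vw),
     (B 4, Vv), (B 4, Vw), (B 5, Vv), (B 5, Vw)}"
  by (auto simp: half_edges_def G1_def)

lemma cyc_G0: "cyc G0 = 3"
proof -
  let ?R = "{(A 2, Vv), (A 2, Vw), (A 4, Vw)}"
  have faces: "range (\<lambda>k. (face_step G0 ^^ k) (A 2, Vv)) = set (iterates (face_step G0) (A 2, Vv) 6)"
    "range (\<lambda>k. (face_step G0 ^^ k) (A 2, Vw)) = set (iterates (face_step G0) (A 2, Vw) 2)"
    "range (\<lambda>k. (face_step G0 ^^ k) (A 4, Vw)) = set (iterates (face_step G0) (A 4, Vw) 2)"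
    by (rule range_funpow_eq_iterates; simp add: funpow_numeral_apply)+
  have "cyc G0 = card ?R"
  proof (rule cyc_eq_card_representatives)
    show "half_edges G0 = (\<Union>h\<in>?R. range (\<lambda>k. (face_step G0 ^^ k) h))"
      unfolding half_edges_G0 UN_insert UN_empty faces by auto
    show "\<exists>p>0. (face_step G0 ^^ p) h = h" if "h \<in> ?R" for h
      using that by (intro exI[of _ 6]) (auto simp: funpow_numeral_apply)
    show "h' = h" if "h \<in> ?R" "h' \<in> ?R" "h' \<in> range (\<lambda>k. (face_step G0 ^^ k) h)" for h h'
      using that unfolding insert_iff empty_iff by (elim disjE) (simp_all add: faces)
  qed
  then show ?thesis by simp
qed

lemma cyc_G1: "cyc G1 = 1"
proof -
  have face: "range (\<lambda>k. (face_step G1 ^^ k) (B 2, Vv)) = set (iterates (face_step G1) (B 2, Vv) 10)"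
    by (rule range_funpow_eq_iterates) (simp_all add: funpow_numeral_apply)
  have "cyc G1 = card {(B 2, Vv)}"
  proof (rule cyc_eq_card_representatives)
    show "half_edges G1 = (\<Union>h\<in>{(B 2, Vv)}. range (\<lambda>k. (face_step G1 ^^ k) h))"
      unfolding half_edges_G1 UN_insert UN_empty face by auto
    show "\<exists>p>0. (face_step G1 ^^ p) h = h" if "h \<in> {(B 2, Vv)}" for h
      using that by (intro exI[of _ 10]) (auto simp: funpow_numeral_apply)
  qed simp
  then show ?thesis by simp
qed

lemma genus_G0: "genus G0 = 1"
  using dipole_G0 by (simp add: genus_def cyc_G0 dipole_def)

lemma genus_G1: "genus G1 = 2"
  using dipole_G1 by (simp add: genus_def cyc_G1 dipole_def)

lemma nat_mod_scale:
  fixes c k m :: nat and d :: int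
  assumes "0 < m"
  shows "c * nat ((int k + d) mod int m) mod m = nat ((int (c * k mod m) + int c * d) mod int m)"
proof -
  have "int (c * nat ((int k + d) mod int m) mod m) = int c * ((int k + d) mod int m) mod int m"
    using assms by (simp add: of_nat_mod)
  also have "\<dots> = int c * (int k + d) mod int m"
    by (simp add: mod_mult_right_eq)
  also have "\<dots> = (int (c * k mod m) + int c * d) mod int m"
    by (simp add: of_nat_mod mod_add_left_eq distrib_left)
  finally show ?thesis by simp
qed

lemma phi_rho_G0_nth:
  assumes "k < 5"
  shows "phi {rho G0 x ! k} = {rho G1 x ! (2 * k mod 5)}"
proof -
  have "\<forall>k<5. phi {rho G0 x ! k} = {rho G1 x ! (2 * k mod 5)}"
    unfolding all_less_5 by (cases x) (simp_all add: phi_def)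
  then show ?thesis using assms by blast
qed

lemma phi_rotate:
  assumes "k < 5"
  shows "phi {rho G0 x ! nat ((int k + d) mod 5)} = {rho G1 x ! nat ((int (2 * k mod 5) + 2 * d) mod 5)}"
proof -
  have "nat ((int k + d) mod 5) < 5" by (simp add: nat_less_iff)
  then show ?thesis using phi_rho_G0_nth nat_mod_scale[of 5 2 k d] by simp
qed

lemma dvw_double: "dvw (2 * n) x = 2 * dvw n x"
  by (simp add: dvw_def)

lemma dvw_degree: "dvw n Vv + dvw n Vw = 0"
  by (simp add: dvw_def)

lemma spanning_trees_G0_nth:
  assumes "T \<in> spanning_trees G0"
  obtains k where "k < 5" "T = {rho G0 x ! k}"
proof -
  obtain e where "e \<in> edges G0" "T = {e}"
    using assms unfolding spanning_trees_dipole[OF dipole_G0] by blast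
  then show ?thesis using edge_dipole_nth[OF dipole_G0, of e x] that by auto
qed

lemma phi_rotor_route:
  assumes "T \<in> spanning_trees G0"
  shows "phi (rotor_route G0 u (dvw n) T) = rotor_route G1 u (dvw (2 * n)) (phi T)"
proof -
  let ?x = "opposite u"
  obtain k where k: "k < 5" "T = {rho G0 ?x ! k}" using spanning_trees_G0_nth[OF assms] .
  have "phi (rotor_route G0 u (dvw n) T) = phi {rho G0 ?x ! nat ((int k + dvw n ?x) mod 5)}"
    using rotor_route_dipole[OF dipole_G0, of k u "dvw n"] k by simp
  also have "\<dots> = {rho G1 ?x ! nat ((int (2 * k mod 5) + 2 * dvw n ?x) mod 5)}"
    by (rule phi_rotate[OF k(1)])
  also have "\<dots> = rotor_route G1 u (dvw (2 * n)) (phi T)"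
    using rotor_route_dipole[OF dipole_G1, of "2 * k mod 5" u "dvw (2 * n)"]
    by (simp add: k(2) phi_rho_G0_nth[OF k(1)] dvw_double)
  finally show ?thesis .
qed

lemma phi_bernardi:
  assumes "T \<in> spanning_trees G0" "e0 \<in> edges G0" "e1 \<in> edges G1"
  shows "phi (bernardi G0 u e0 (dvw n) T) = bernardi G1 u e1 (dvw (2 * n)) (phi T)"
proof -
  obtain k0 where k0: "k0 < 5" "e0 = rho G0 u ! k0"
    using edge_dipole_nth[OF dipole_G0 assms(2), of u] by auto
  obtain k1 where k1: "k1 < 5" "e1 = rho G1 u ! k1"
    using edge_dipole_nth[OF dipole_G1 assms(3), of u] by auto
  obtain j where j: "j < 5" "T = {rho G0 u ! j}" using spanning_trees_G0_nth[OF assms(1)] .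
  have "phi (bernardi G0 u e0 (dvw n) T) = phi {rho G0 u ! nat ((int j + dvw n u) mod 5)}"
    using bernardi_G0[OF k0(1) j(1) dvw_degree[of n]] by (simp add: k0(2) j(2))
  also have "\<dots> = {rho G1 u ! nat ((int (2 * j mod 5) + 2 * dvw n u) mod 5)}"
    by (rule phi_rotate[OF j(1)])
  also have "\<dots> = bernardi G1 u e1 (dvw (2 * n)) (phi T)"
    using bernardi_G1[OF k1(1) _ dvw_degree[of "2 * n"], of "2 * j mod 5" u] dvw_double[of n u]
    by (simp add: k1(2) j(2) phi_rho_G0_nth[OF j(1)])
  finally show ?thesis .
qed

theorem proposition3p4:
  shows "(\<forall>u\<in>{Vv, Vw}. \<forall>n :: int. \<forall>T\<in>spanning_trees G0.
            phi (rotor_route G0 u (dvw n) T) = rotor_route G1 u (dvw (2 * n)) (phi T) \<and>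
            (\<forall>e0 e1. e0 \<in> edges G0 \<and> u \<in> ends G0 e0 \<and> e1 \<in> edges G1 \<and> u \<in> ends G1 e1 \<longrightarrow>
               phi (bernardi G0 u e0 (dvw n) T) = bernardi G1 u e1 (dvw (2 * n)) (phi T)))
         \<and> genus G0 = 1 \<and> genus G1 = 2"
proof (intro conjI ballI allI impI genus_G0 genus_G1)
  fix u n T assume "T \<in> spanning_trees G0"
  then show "phi (rotor_route G0 u (dvw n) T) = rotor_route G1 u (dvw (2 * n)) (phi T)"
    by (rule phi_rotor_route)
next
  fix u n T e0 e1
  assume "T \<in> spanning_trees G0" "e0 \<in> edges G0 \<and> u \<in> ends G0 e0 \<and> e1 \<in> edges G1 \<and> u \<in> ends G1 e1"
  then show "phi (bernardi G0 u e0 (dvw n) T) = bernardi G1 u e1 (dvw (2 * n)) (phi T)"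
    using phi_bernardi by blast
qed

end
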